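(* Let $F:\mathcal{G}_{\Sigma,\Delta,\pi}\to\mathcal{G}_{\Sigma,\Delta,\pi}$ be a causal graph dynamics with a monotonic local rule $f$ of radius $r$ (so $F$ is monotonic), and assume that $\mathrm{Conj}_F(R)$ is a singleton $\{\overline{F}(R)\}$ for every renaming $R$. Then the assignment $\widetilde{f}:\mathbf{D}^r_{\Sigma,\Delta,\pi}\to\mathbf{G}_{\Sigma,\Delta,\pi}$ given on objects by $\widetilde{f}((H,\{c\}))=f((H,c))$ and $\widetilde{f}((\varnothing,\emptyset))=\varnothing$, and on a morphism $m:(H,C)\to(H',C')$ by the morphism $\widetilde{f}(m):\widetilde{f}((H,C))\to\widetilde{f}((H',C'))$ with $|\widetilde{f}(m)|=\overline{F}(|m|)$, is a well-defined functor.
   Context: Fix an uncountably infinite set $\mathcal{V}$, sets $\Sigma,\Delta$, finite $\pi$. Graphs: countable $V(G)\subset\mathcal{V}$, a set $E(G)$ of pairwise disjoint two-element subsets of $V(G)\times\pi$, partial labelings $\sigma(G),\delta(G)$; $\subseteq$ is componentwise inclusion. Renamings are bijections of $\mathcal{V}$ acting naturally on graphs and pointed graphs ($V(R(G))=R(V(G))$, edges $\{u\!:\!i,v\!:\!j\}\mapsto\{R(u)\!:\!i,R(v)\!:\!j\}$, labelings precomposed with $R^{-1}$, $R(G,v)=(R(G),R(v))$). $\mathrm{Conj}_F(R)$ is the set of renamings $R'$ with $F\circ R=R'\circ F$. Disk $G^r_c=(H,c)$: vertices at distance $\le r+1$ from $c$, edges of $G$ with an endpoint at distance $\le r$, vertex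 labels restricted to distance $\le r$, edge labels of kept edges; $\mathcal{D}^r$ the set of radius-$r$ disks, ordered by $(H,c)\subseteq(H',c')$ iff $H\subseteq H'$ and $c=c'$. A local rule of radius $r$ is $f:\mathcal{D}^r\to$ graphs with: each renaming $R$ has $R'$ with $f\circ R=R'\circ f$; families of disks with empty intersection have images with empty intersection; bounded $|V(f(D))|$; $f(G^r_u),f(G^r_v)$ consistent for all $G,u,v$. A CGD is $F(G)=\bigcup_{v\in V(G)}f(G^r_v)$. Category $\mathbf{G}_{\Sigma,\Delta,\pi}$: objects graphs, morphism $m:G\to H$ a renaming $|m|$ with $|m|(G)\subseteq H$, composition by composition of renamings. Category $\mathbf{D}^r_{\Sigma,\Delta,\pi}$: objects $(H,\{c\})$ for $(H,c)\in\mathcal{D}^r$ and $(\varnothing,\emptyset)$; morphisms $m:(H_1,C_1)\to(H_2,C_2)$ are morphisms $m:H_1\to H_2$ of $\mathbf{G}_{\Sigma,\Delta,\pi}$ with $|m|(C_1)\subseteq C_2$. *)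

theory Defs
  imports Main "HOL-Library.Countable_Set"
begin

text \<open>Vertices of type 'v (the name space, assumed uncountable in the theorem),
ports of type 'p (finite), vertex labels 's, edge labels 'd.
An edge is a two-element set of vertex:port pairs.\<close>

record ('v, 'p, 's, 'd) graph =
  gV :: "'v set"
  gE :: "('v \<times> 'p) set set"
  gsig :: "'v \<Rightarrow> 's option"
  gdel :: "('v \<times> 'p) set \<Rightarrow> 'd option"

definition is_graph :: "('v, 'p, 's, 'd) graph \<Rightarrow> bool" where
  "is_graph G \<longleftrightarrow>
     countable (gV G) \<and>
     (\<forall>e\<in>gE G. e \<subseteq> gV G \<times> UNIV \<and> card e = 2) \<and>
     (\<forall>e\<in>gE G. \<forall>e'\<in>gE G. e \<noteq> e' \<longrightarrow> e \<inter> e' = {}) \<and>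
     dom (gsig G) \<subseteq> gV G \<and> dom (gdel G) \<subseteq> gE G"

definition empty_graph :: "('v, 'p, 's, 'd) graph" where
  "empty_graph = \<lparr>gV = {}, gE = {}, gsig = (\<lambda>_. None), gdel = (\<lambda>_. None)\<rparr>"

definition subgraph :: "('v, 'p, 's, 'd) graph \<Rightarrow> ('v, 'p, 's, 'd) graph \<Rightarrow> bool" where
  "subgraph G H \<longleftrightarrow> gV G \<subseteq> gV H \<and> gE G \<subseteq> gE H \<and>
     gsig G \<subseteq>\<^sub>m gsig H \<and> gdel G \<subseteq>\<^sub>m gdel H"

text \<open>Union of a family of graphs (labels taken from any member; meaningful when
the members are consistent).\<close>
definition gUnion :: "('v, 'p, 's, 'd) graph set \<Rightarrow> ('v, 'p, 's, 'd) graph" where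
  "gUnion S = \<lparr>gV = \<Union>(gV ` S), gE = \<Union>(gE ` S),
     gsig = (\<lambda>x. if \<exists>H\<in>S. gsig H x \<noteq> None
                  then gsig (SOME H. H \<in> S \<and> gsig H x \<noteq> None) x else None),
     gdel = (\<lambda>x. if \<exists>H\<in>S. gdel H x \<noteq> None
                  then gdel (SOME H. H \<in> S \<and> gdel H x \<noteq> None) x else None)\<rparr>"

definition consistent :: "('v, 'p, 's, 'd) graph \<Rightarrow> ('v, 'p, 's, 'd) graph \<Rightarrow> bool" where
  "consistent G H \<longleftrightarrow>
     (\<forall>x. gsig G x \<noteq> None \<and> gsig H x \<noteq> None \<longrightarrow> gsig G x = gsig H x) \<and>
     (\<forall>e. gdel G e \<noteq> None \<and> gdel H e \<noteq> None \<longrightarrow> gdel G e = gdel H e) \<and>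
     is_graph (gUnion {G, H})"

definition rename :: "('v \<Rightarrow> 'v) \<Rightarrow> ('v, 'p, 's, 'd) graph \<Rightarrow> ('v, 'p, 's, 'd) graph" where
  "rename R G = \<lparr>gV = R ` gV G,
     gE = (\<lambda>e. apfst R ` e) ` gE G,
     gsig = gsig G \<circ> inv R,
     gdel = (\<lambda>e. gdel G (apfst (inv R) ` e))\<rparr>"

definition prename :: "('v \<Rightarrow> 'v) \<Rightarrow> ('v, 'p, 's, 'd) graph \<times> 'v \<Rightarrow> ('v, 'p, 's, 'd) graph \<times> 'v" where
  "prename R D = (rename R (fst D), R (snd D))"

definition adj_rel :: "('v, 'p, 's, 'd) graph \<Rightarrow> ('v \<times> 'v) set" where
  "adj_rel G = {(u, v). \<exists>i j. {(u, i), (v, j)} \<in> gE G}"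

definition dist_le :: "('v, 'p, 's, 'd) graph \<Rightarrow> nat \<Rightarrow> 'v \<Rightarrow> 'v \<Rightarrow> bool" where
  "dist_le G n c v \<longleftrightarrow> c \<in> gV G \<and> v \<in> gV G \<and> (\<exists>k\<le>n. (c, v) \<in> adj_rel G ^^ k)"

definition disk :: "('v, 'p, 's, 'd) graph \<Rightarrow> nat \<Rightarrow> 'v \<Rightarrow> ('v, 'p, 's, 'd) graph" where
  "disk G r c = \<lparr>gV = {v \<in> gV G. dist_le G (Suc r) c v},
     gE = {e \<in> gE G. \<exists>u i. (u, i) \<in> e \<and> dist_le G r c u},
     gsig = gsig G |` {v. dist_le G r c v},
     gdel = gdel G |` {e \<in> gE G. \<exists>u i. (u, i) \<in> e \<and> dist_le G r c u}\<rparr>"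

definition pdisk :: "('v, 'p, 's, 'd) graph \<Rightarrow> nat \<Rightarrow> 'v \<Rightarrow> ('v, 'p, 's, 'd) graph \<times> 'v" where
  "pdisk G r c = (disk G r c, c)"

definition Disks :: "nat \<Rightarrow> (('v, 'p, 's, 'd) graph \<times> 'v) set" where
  "Disks r = {D. \<exists>G c. is_graph G \<and> c \<in> gV G \<and> D = pdisk G r c}"

definition local_rule :: "nat \<Rightarrow> (('v, 'p, 's, 'd) graph \<times> 'v \<Rightarrow> ('v, 'p, 's, 'd) graph) \<Rightarrow> bool" where
  "local_rule r f \<longleftrightarrow>
     (\<forall>D\<in>Disks r. is_graph (f D)) \<and>
     (\<forall>R. bij R \<longrightarrow> (\<exists>R'. bij R' \<and> (\<forall>D\<in>Disks r. f (prename R D) = rename R' (f D)))) \<and>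
     (\<forall>S. S \<subseteq> Disks r \<and> S \<noteq> {} \<and> (\<Inter>D\<in>S. gV (fst D)) = {} \<longrightarrow> (\<Inter>D\<in>S. gV (f D)) = {}) \<and>
     (\<exists>b::nat. \<forall>D\<in>Disks r. finite (gV (f D)) \<and> card (gV (f D)) \<le> b) \<and>
     (\<forall>G u v. is_graph G \<and> u \<in> gV G \<and> v \<in> gV G \<longrightarrow>
        consistent (f (pdisk G r u)) (f (pdisk G r v)))"

definition monotonic_rule :: "nat \<Rightarrow> (('v, 'p, 's, 'd) graph \<times> 'v \<Rightarrow> ('v, 'p, 's, 'd) graph) \<Rightarrow> bool" where
  "monotonic_rule r f \<longleftrightarrow>
     (\<forall>D\<in>Disks r. \<forall>D'\<in>Disks r. subgraph (fst D) (fst D') \<and> snd D = snd D' \<longrightarrow> subgraph (f D) (f D'))"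

definition cgd :: "nat \<Rightarrow> (('v, 'p, 's, 'd) graph \<times> 'v \<Rightarrow> ('v, 'p, 's, 'd) graph) \<Rightarrow>
    ('v, 'p, 's, 'd) graph \<Rightarrow> ('v, 'p, 's, 'd) graph" where
  "cgd r f G = gUnion ((\<lambda>v. f (pdisk G r v)) ` gV G)"

definition Conj :: "nat \<Rightarrow> (('v, 'p, 's, 'd) graph \<times> 'v \<Rightarrow> ('v, 'p, 's, 'd) graph) \<Rightarrow>
    ('v \<Rightarrow> 'v) \<Rightarrow> ('v \<Rightarrow> 'v) set" where
  "Conj r f R = {R'. bij R' \<and> (\<forall>G. is_graph G \<longrightarrow> cgd r f (rename R G) = rename R' (cgd r f G))}"

definition Gmor :: "('v, 'p, 's, 'd) graph \<Rightarrow> ('v, 'p, 's, 'd) graph \<Rightarrow> ('v \<Rightarrow> 'v) \<Rightarrow> bool" where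
  "Gmor G H m \<longleftrightarrow> is_graph G \<and> is_graph H \<and> bij m \<and> subgraph (rename m G) H"

definition Dobj :: "nat \<Rightarrow> ('v, 'p, 's, 'd) graph \<times> 'v set \<Rightarrow> bool" where
  "Dobj r X \<longleftrightarrow> (\<exists>H c. X = (H, {c}) \<and> (H, c) \<in> Disks r) \<or> X = (empty_graph, {})"

definition Dmor :: "nat \<Rightarrow> ('v, 'p, 's, 'd) graph \<times> 'v set \<Rightarrow> ('v, 'p, 's, 'd) graph \<times> 'v set \<Rightarrow>
    ('v \<Rightarrow> 'v) \<Rightarrow> bool" where
  "Dmor r X Y m \<longleftrightarrow> Dobj r X \<and> Dobj r Y \<and> Gmor (fst X) (fst Y) m \<and> m ` snd X \<subseteq> snd Y"

text \<open>A functor D^r \<rightarrow> G given by an object map and a morphism map (a morphism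
X \<rightarrow> Y of D^r is determined by X, Y and its underlying renaming).\<close>
definition is_functor_DG :: "nat \<Rightarrow> (('v, 'p, 's, 'd) graph \<times> 'v set \<Rightarrow> ('v, 'p, 's, 'd) graph) \<Rightarrow>
    (('v, 'p, 's, 'd) graph \<times> 'v set \<Rightarrow> ('v, 'p, 's, 'd) graph \<times> 'v set \<Rightarrow> ('v \<Rightarrow> 'v) \<Rightarrow> ('v \<Rightarrow> 'v)) \<Rightarrow> bool" where
  "is_functor_DG r omap mmap \<longleftrightarrow>
     (\<forall>X. Dobj r X \<longrightarrow> is_graph (omap X)) \<and>
     (\<forall>X Y m. Dmor r X Y m \<longrightarrow> Gmor (omap X) (omap Y) (mmap X Y m)) \<and>
     (\<forall>X. Dobj r X \<longrightarrow> mmap X X id = id) \<and>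
     (\<forall>X Y Z m1 m2. Dmor r X Y m1 \<and> Dmor r Y Z m2 \<longrightarrow>
        mmap X Z (m2 \<circ> m1) = mmap Y Z m2 \<circ> mmap X Y m1)"

definition ftilde :: "(('v, 'p, 's, 'd) graph \<times> 'v \<Rightarrow> ('v, 'p, 's, 'd) graph) \<Rightarrow>
    ('v, 'p, 's, 'd) graph \<times> 'v set \<Rightarrow> ('v, 'p, 's, 'd) graph" where
  "ftilde f X = (if snd X = {} then empty_graph else f (fst X, the_elem (snd X)))"

end

theory Submission
  imports Defs
begin

(* A morphism m : (H, {c}) \<rightarrow> (H', {m c}) of D^r renames H into H'. The renaming R that the
   local rule assigns to m, i.e. f (m D) = R (f D) for all disks D, also conjugates F with m,
   because disks commute with renamings and so do unions of graphs whose labels agree. By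
   uniqueness of conjugates R = Fbar m, and monotonicity of f turns m(H) \<subseteq> H' into
   Fbar m (f (H, c)) = f (m(H), m c) \<subseteq> f (H', m c). Functoriality is uniqueness again: id
   conjugates F with id, and Fbar m2 \<circ> Fbar m1 conjugates F with m2 \<circ> m1. *)

lemma graph_eqI:
  fixes G H :: "('v, 'p, 's, 'd) graph"
  shows "gV G = gV H \<Longrightarrow> gE G = gE H \<Longrightarrow> gsig G = gsig H \<Longrightarrow> gdel G = gdel H \<Longrightarrow> G = H"
  by (cases G; cases H) simp

lemma bij_inv_cancel [simp]:
  assumes "bij m"
  shows "m (inv m x) = x" "inv m (m x) = x"
  using assms by (simp_all add: bij_is_surj bij_is_inj surj_f_inv_f)

lemma image_apfst_inv_cancel [simp]:
  fixes m :: "'a \<Rightarrow> 'a"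
  assumes "bij m"
  shows "apfst m ` apfst (inv m) ` e = e" "apfst (inv m) ` apfst m ` e = e"
  using assms by (simp_all add: image_image apfst_compose o_def id_def[symmetric] apfst_id)

lemma rename_simps:
  "gV (rename m G) = m ` gV G"
  "gE (rename m G) = (\<lambda>e. apfst m ` e) ` gE G"
  "gsig (rename m G) = gsig G \<circ> inv m"
  "gdel (rename m G) = (\<lambda>e. gdel G (apfst (inv m) ` e))"
  by (simp_all add: rename_def)

lemma mem_gV_rename:
  assumes "bij m"
  shows "x \<in> gV (rename m G) \<longleftrightarrow> inv m x \<in> gV G"
  using assms by (auto simp: rename_simps intro: image_eqI[where x = "inv m x"])

lemma mem_gE_rename:
  assumes "bij m"
  shows "e \<in> gE (rename m G) \<longleftrightarrow> apfst (inv m) ` e \<in> gE G"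
  using assms by (auto simp: rename_simps intro: image_eqI[where x = "apfst (inv m) ` e"])

lemma rename_id: "rename id G = G"
  by (rule graph_eqI) (simp_all add: rename_def apfst_id inv_id)

lemma rename_comp:
  assumes "bij m1" "bij m2"
  shows "rename (m2 \<circ> m1) G = rename m2 (rename m1 G)"
  by (rule graph_eqI)
    (simp_all add: rename_def image_comp apfst_compose o_inv_distrib[OF assms(2,1)] comp_assoc)

lemma rename_empty_graph: "rename m empty_graph = empty_graph"
  by (rule graph_eqI) (simp_all add: rename_def empty_graph_def fun_eq_iff)

lemma is_graph_rename:
  fixes G :: "('v, 'p, 's, 'd) graph"
  assumes "bij m" and G: "is_graph G"
  shows "is_graph (rename m G)"
  unfolding is_graph_def
proof (intro conjI ballI impI)
  have inj_apfst: "inj (apfst m :: 'v \<times> 'p \<Rightarrow> _)"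
    using bij_is_inj[OF assms(1)] by (auto simp: inj_def apfst_def map_prod_def)
  show "countable (gV (rename m G))"
    using G by (simp add: rename_simps is_graph_def)
  fix e assume "e \<in> gE (rename m G)"
  then obtain e0 where e0: "e0 \<in> gE G" "e = apfst m ` e0"
    by (auto simp: rename_simps)
  show "e \<subseteq> gV (rename m G) \<times> UNIV"
    using G e0 by (force simp: is_graph_def rename_simps)
  show "card e = 2"
    using G e0 card_image[OF inj_on_subset[OF inj_apfst subset_UNIV]] by (simp add: is_graph_def)
  fix e' assume "e' \<in> gE (rename m G)" "e \<noteq> e'"
  then obtain e0' where "e0' \<in> gE G" "e' = apfst m ` e0'" "e0 \<noteq> e0'"
    using e0 by (auto simp: rename_simps)
  then show "e \<inter> e' = {}"
    using G e0 by (simp add: is_graph_def image_Int[OF inj_apfst, symmetric])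
next
  show "dom (gsig (rename m G)) \<subseteq> gV (rename m G)"
    using G assms(1) by (auto simp: is_graph_def mem_gV_rename rename_simps(3) dom_def)
  show "dom (gdel (rename m G)) \<subseteq> gE (rename m G)"
    using G assms(1) by (auto simp: is_graph_def mem_gE_rename rename_simps(4) dom_def)
qed

lemma adj_rel_rename:
  assumes "bij m"
  shows "(m a, m b) \<in> adj_rel (rename m G) \<longleftrightarrow> (a, b) \<in> adj_rel G"
  using assms by (simp add: adj_rel_def mem_gE_rename)

lemma relpow_adj_rel_rename:
  assumes "bij m"
  shows "(m a, m b) \<in> adj_rel (rename m G) ^^ k \<longleftrightarrow> (a, b) \<in> adj_rel G ^^ k"
proof (induction k arbitrary: b)
  case 0
  show ?case using assms by (simp add: bij_is_inj inj_eq)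
next
  case (Suc k)
  have "(m a, m b) \<in> adj_rel (rename m G) ^^ Suc k \<longleftrightarrow>
      (\<exists>y. (m a, m y) \<in> adj_rel (rename m G) ^^ k \<and> (m y, m b) \<in> adj_rel (rename m G))"
    using assms by (auto simp: relpow.simps(2)) (metis bij_inv_cancel(1))
  also have "\<dots> \<longleftrightarrow> (a, b) \<in> adj_rel G ^^ Suc k"
    by (auto simp: relpow.simps(2) Suc.IH adj_rel_rename[OF assms])
  finally show ?case .
qed

lemma dist_le_rename:
  assumes "bij m"
  shows "dist_le (rename m G) n (m c) (m v) \<longleftrightarrow> dist_le G n c v"
  using assms by (simp add: dist_le_def mem_gV_rename relpow_adj_rel_rename)

lemma disk_rename:
  assumes "bij m"
  shows "disk (rename m G) r (m c) = rename m (disk G r c)"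
proof -
  have dist_inv: "dist_le (rename m G) n (m c) x \<longleftrightarrow> dist_le G n c (inv m x)" for n x
    using dist_le_rename[OF assms, of G n c "inv m x"] assms by simp
  have touches_inv: "(\<exists>u i. (u, i) \<in> e \<and> dist_le (rename m G) r (m c) u) \<longleftrightarrow>
      (\<exists>u i. (u, i) \<in> apfst (inv m) ` e \<and> dist_le G r c u)" for e
    using assms by (force simp: dist_inv)
  show ?thesis
  proof (rule graph_eqI)
    show "gV (disk (rename m G) r (m c)) = gV (rename m (disk G r c))"
      using assms by (auto simp: set_eq_iff disk_def mem_gV_rename dist_inv)
    show "gE (disk (rename m G) r (m c)) = gE (rename m (disk G r c))"
      unfolding set_eq_iff disk_def graph.select_convs mem_Collect_eq mem_gE_rename[OF assms] touches_inv
      by blast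
    show "gsig (disk (rename m G) r (m c)) = gsig (rename m (disk G r c))"
      by (auto simp: disk_def rename_simps restrict_map_def dist_inv fun_eq_iff)
    show "gdel (disk (rename m G) r (m c)) = gdel (rename m (disk G r c))"
      unfolding fun_eq_iff disk_def graph.select_convs rename_simps(4) restrict_map_def
        mem_Collect_eq mem_gE_rename[OF assms] touches_inv
      by blast
  qed
qed

lemma pdisk_rename:
  assumes "bij m"
  shows "pdisk (rename m G) r (m c) = prename m (pdisk G r c)"
  using disk_rename[OF assms] by (simp add: pdisk_def prename_def)

lemma prename_in_Disks:
  assumes "bij m" "D \<in> Disks r"
  shows "prename m D \<in> Disks r"
proof -
  obtain G c where G: "is_graph G" "c \<in> gV G" and D: "D = pdisk G r c"
    using assms(2) by (auto simp: Disks_def)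
  have "prename m D = pdisk (rename m G) r (m c)"
    unfolding D by (rule pdisk_rename[OF assms(1), symmetric])
  moreover have "is_graph (rename m G)" "m c \<in> gV (rename m G)"
    using G is_graph_rename[OF assms(1)] by (simp_all add: rename_simps)
  ultimately show ?thesis
    unfolding Disks_def by blast
qed

definition labels_agree :: "('v, 'p, 's, 'd) graph set \<Rightarrow> bool" where
  "labels_agree S \<longleftrightarrow> (\<forall>G\<in>S. \<forall>H\<in>S.
     (\<forall>x. gsig G x \<noteq> None \<and> gsig H x \<noteq> None \<longrightarrow> gsig G x = gsig H x) \<and>
     (\<forall>e. gdel G e \<noteq> None \<and> gdel H e \<noteq> None \<longrightarrow> gdel G e = gdel H e))"

lemma labels_agree_rename:
  "labels_agree S \<Longrightarrow> labels_agree (rename R ` S)"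
  by (simp add: labels_agree_def rename_simps)

lemma gsig_gUnion:
  assumes "labels_agree S" "H \<in> S" "gsig H x \<noteq> None"
  shows "gsig (gUnion S) x = gsig H x"
proof -
  have "\<exists>H. H \<in> S \<and> gsig H x \<noteq> None" using assms by blast
  from someI_ex[OF this] show ?thesis
    using assms unfolding gUnion_def labels_agree_def by auto
qed

lemma gdel_gUnion:
  assumes "labels_agree S" "H \<in> S" "gdel H e \<noteq> None"
  shows "gdel (gUnion S) e = gdel H e"
proof -
  have "\<exists>H. H \<in> S \<and> gdel H e \<noteq> None" using assms by blast
  from someI_ex[OF this] show ?thesis
    using assms unfolding gUnion_def labels_agree_def by auto
qed

lemma gUnion_rename:
  assumes agree: "labels_agree S"
  shows "gUnion (rename R ` S) = rename R (gUnion S)"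
proof (rule graph_eqI)
  have agree_rename: "labels_agree (rename R ` S)"
    using agree by (rule labels_agree_rename)
  show "gV (gUnion (rename R ` S)) = gV (rename R (gUnion S))"
    by (auto simp: gUnion_def rename_simps)
  show "gE (gUnion (rename R ` S)) = gE (rename R (gUnion S))"
    by (auto simp: gUnion_def rename_simps)
  show "gsig (gUnion (rename R ` S)) = gsig (rename R (gUnion S))"
  proof
    fix x
    show "gsig (gUnion (rename R ` S)) x = gsig (rename R (gUnion S)) x"
    proof (cases "\<exists>H\<in>S. gsig H (inv R x) \<noteq> None")
      case True
      then obtain H where H: "H \<in> S" "gsig H (inv R x) \<noteq> None" by blast
      then have "gsig (gUnion (rename R ` S)) x = gsig (rename R H) x"
        by (intro gsig_gUnion[OF agree_rename]) (simp_all add: rename_simps)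
      also have "\<dots> = gsig (rename R (gUnion S)) x"
        using gsig_gUnion[OF agree H] by (simp add: rename_simps)
      finally show ?thesis .
    next
      case False
      then show ?thesis by (simp add: gUnion_def rename_simps)
    qed
  qed
  show "gdel (gUnion (rename R ` S)) = gdel (rename R (gUnion S))"
  proof
    fix e
    show "gdel (gUnion (rename R ` S)) e = gdel (rename R (gUnion S)) e"
    proof (cases "\<exists>H\<in>S. gdel H (apfst (inv R) ` e) \<noteq> None")
      case True
      then obtain H where H: "H \<in> S" "gdel H (apfst (inv R) ` e) \<noteq> None" by blast
      then have "gdel (gUnion (rename R ` S)) e = gdel (rename R H) e"
        by (intro gdel_gUnion[OF agree_rename]) (simp_all add: rename_simps)
      also have "\<dots> = gdel (rename R (gUnion S)) e"
        using gdel_gUnion[OF agree H] by (simp add: rename_simps)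
      finally show ?thesis .
    next
      case False
      then show ?thesis by (simp add: gUnion_def rename_simps)
    qed
  qed
qed

lemma cgd_rename:
  assumes rule: "local_rule r f" and "bij m" "is_graph G"
    and f_rename: "\<forall>D\<in>Disks r. f (prename m D) = rename R (f D)"
  shows "cgd r f (rename m G) = rename R (cgd r f G)"
proof -
  let ?S = "(\<lambda>v. f (pdisk G r v)) ` gV G"
  have "consistent (f (pdisk G r u)) (f (pdisk G r v))" if "u \<in> gV G" "v \<in> gV G" for u v
    using rule \<open>is_graph G\<close> that unfolding local_rule_def by blast
  then have "labels_agree ?S"
    unfolding labels_agree_def ball_simps consistent_def by blast
  have "f (pdisk (rename m G) r (m v)) = rename R (f (pdisk G r v))" if "v \<in> gV G" for v
  proof -
    have "pdisk G r v \<in> Disks r"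
      using \<open>is_graph G\<close> that unfolding Disks_def by blast
    then show ?thesis
      unfolding pdisk_rename[OF \<open>bij m\<close>] using f_rename by blast
  qed
  then have "cgd r f (rename m G) = gUnion (rename R ` ?S)"
    by (simp add: cgd_def rename_simps image_image)
  also have "\<dots> = rename R (cgd r f G)"
    using gUnion_rename[OF \<open>labels_agree ?S\<close>] by (simp add: cgd_def)
  finally show ?thesis .
qed

lemma local_rule_Conj:
  assumes rule: "local_rule r f" and "bij m"
  obtains R where "R \<in> Conj r f m" "\<forall>D\<in>Disks r. f (prename m D) = rename R (f D)"
proof -
  have "\<forall>m. bij m \<longrightarrow> (\<exists>R. bij R \<and> (\<forall>D\<in>Disks r. f (prename m D) = rename R (f D)))"
    using rule unfolding local_rule_def by (rule conjunct1[OF conjunct2])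
  then obtain R where "bij R" and f_rename: "\<forall>D\<in>Disks r. f (prename m D) = rename R (f D)"
    using \<open>bij m\<close> by blast
  then have "R \<in> Conj r f m"
    using cgd_rename[OF rule \<open>bij m\<close>] by (simp add: Conj_def)
  then show thesis using f_rename by (rule that)
qed

lemma id_in_Conj: "id \<in> Conj r f id"
  by (simp add: Conj_def rename_id)

lemma comp_in_Conj:
  assumes "bij m1" "bij m2" "R1 \<in> Conj r f m1" "R2 \<in> Conj r f m2"
  shows "R2 \<circ> R1 \<in> Conj r f (m2 \<circ> m1)"
  using assms by (simp add: Conj_def bij_comp rename_comp is_graph_rename)

lemma is_graph_ftilde:
  assumes "local_rule r f" "Dobj r X"
  shows "is_graph (ftilde f X)"
proof -
  have "\<forall>D\<in>Disks r. is_graph (f D)"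
    using assms(1) unfolding local_rule_def by (rule conjunct1)
  moreover have "is_graph empty_graph"
    by (simp add: is_graph_def empty_graph_def)
  ultimately show ?thesis
    using assms(2) by (auto simp: Dobj_def ftilde_def)
qed

lemma Gmor_ftilde:
  assumes rule: "local_rule r f" and mono: "monotonic_rule r f" and mor: "Dmor r X Y m"
    and "bij R" and f_rename: "\<forall>D\<in>Disks r. f (prename m D) = rename R (f D)"
  shows "Gmor (ftilde f X) (ftilde f Y) R"
proof -
  have "Dobj r X" "Dobj r Y" and "bij m" "subgraph (rename m (fst X)) (fst Y)"
    and "m ` snd X \<subseteq> snd Y"
    using mor by (simp_all add: Dmor_def Gmor_def)
  have "subgraph (rename R (ftilde f X)) (ftilde f Y)"
  proof (cases "X = (empty_graph, {})")
    case True
    then show ?thesis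
      by (simp add: ftilde_def rename_empty_graph) (simp add: subgraph_def empty_graph_def map_le_def)
  next
    case False
    then obtain H c where X: "X = (H, {c})" "(H, c) \<in> Disks r"
      using \<open>Dobj r X\<close> unfolding Dobj_def by blast
    then obtain H' where Y: "Y = (H', {m c})" "(H', m c) \<in> Disks r"
      using \<open>Dobj r Y\<close> \<open>m ` snd X \<subseteq> snd Y\<close> unfolding Dobj_def by auto
    have "subgraph (f (prename m (H, c))) (f (H', m c))"
      using mono prename_in_Disks[OF \<open>bij m\<close> X(2)] Y(2) \<open>subgraph (rename m (fst X)) (fst Y)\<close>
      unfolding monotonic_rule_def by (simp add: X Y prename_def)
    then show ?thesis
      using f_rename X Y by (simp add: ftilde_def)
  qed
  then show ?thesis
    using is_graph_ftilde[OF rule] \<open>Dobj r X\<close> \<open>Dobj r Y\<close> \<open>bij R\<close> by (simp add: Gmor_def)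
qed

theorem proposition4p19:
  fixes r :: nat
    and f :: "('v, 'p::finite, 's, 'd) graph \<times> 'v \<Rightarrow> ('v, 'p, 's, 'd) graph"
    and Fbar :: "('v \<Rightarrow> 'v) \<Rightarrow> ('v \<Rightarrow> 'v)"
  assumes "\<not> countable (UNIV :: 'v set)"
    and "local_rule r f"
    and "monotonic_rule r f"
    and "\<forall>R. bij R \<longrightarrow> Conj r f R = {Fbar R}"
  shows "is_functor_DG r (ftilde f) (\<lambda>X Y m. Fbar m)"
proof -
  have Fbar_unique: "Fbar m = R" if "bij m" "R \<in> Conj r f m" for m R
    using assms(4) that by simp
  have Fbar_Conj: "Fbar m \<in> Conj r f m" if "bij m" for m
    using assms(4) that by simp
  have f_rename: "\<forall>D\<in>Disks r. f (prename m D) = rename (Fbar m) (f D)" if m: "bij m" for m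
  proof -
    obtain R where "R \<in> Conj r f m" "\<forall>D\<in>Disks r. f (prename m D) = rename R (f D)"
      using local_rule_Conj[OF assms(2) m] .
    with Fbar_unique[OF m] show ?thesis by simp
  qed
  show ?thesis
    unfolding is_functor_DG_def
  proof (intro conjI allI impI)
    fix X Y Z :: "('v, 'p, 's, 'd) graph \<times> 'v set" and m m1 m2 :: "'v \<Rightarrow> 'v"
    show "Dobj r X \<Longrightarrow> is_graph (ftilde f X)"
      by (rule is_graph_ftilde[OF assms(2)])
    show "Gmor (ftilde f X) (ftilde f Y) (Fbar m)" if "Dmor r X Y m"
    proof -
      have "bij m" using that by (simp add: Dmor_def Gmor_def)
      then have "bij (Fbar m)" using Fbar_Conj by (simp add: Conj_def)
      with \<open>bij m\<close> show ?thesis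
        using Gmor_ftilde[OF assms(2,3) that] f_rename by blast
    qed
    show "Fbar id = id"
      using Fbar_unique[OF bij_id id_in_Conj] .
    assume "Dmor r X Y m1 \<and> Dmor r Y Z m2"
    then have "bij m1" "bij m2" by (simp_all add: Dmor_def Gmor_def)
    then show "Fbar (m2 \<circ> m1) = Fbar m2 \<circ> Fbar m1"
      using Fbar_unique[OF bij_comp] comp_in_Conj[OF _ _ Fbar_Conj Fbar_Conj] by blast
  qed
qed

end
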